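(* For every integer $r\ge 1$, the set $R_r$ is high above the set $L_r$.
   Context: Define finite sets $P_r\subset\mathbb{Z}^2$ for integers $r\ge 0$ recursively: $P_0:=\{(0,0)\}$; for $r\ge 1$, $L_r:=P_{r-1}$, $R_r:=\{(x+\delta_r,\,y+\delta_r'):(x,y)\in L_r\}$ and $P_r:=L_r\cup R_r$, where $\delta_r:=3\cdot 4^{r-1}$ and $\delta_r':=(3r+1)\cdot 4^{r-1}$. For finite point sets $X,Y$ in the plane, $X$ is said to be high above $Y$ if every line determined by two points of $X$ lies strictly above every point of $Y$, and every line determined by two points of $Y$ lies strictly below every point of $X$ (the conditions are vacuous when the respective set has fewer than two points). *)

theory Defs
  imports Main
begin

type_synonym pt = "int \<times> int"

definition delta :: "nat \<Rightarrow> int" where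
  "delta r = 3 * 4 ^ (r - 1)"

definition delta' :: "nat \<Rightarrow> int" where
  "delta' r = (3 * int r + 1) * 4 ^ (r - 1)"

definition shift :: "int \<Rightarrow> int \<Rightarrow> pt set \<Rightarrow> pt set" where
  "shift dx dy S = (\<lambda>(x, y). (x + dx, y + dy)) ` S"

fun P :: "nat \<Rightarrow> pt set" where
  "P 0 = {(0, 0)}"
| "P (Suc r) = P r \<union> shift (delta (Suc r)) (delta' (Suc r)) (P r)"

definition L :: "nat \<Rightarrow> pt set" where
  "L r = P (r - 1)"

definition R :: "nat \<Rightarrow> pt set" where
  "R r = shift (delta r) (delta' r) (L r)"

definition line_above :: "pt \<Rightarrow> pt \<Rightarrow> pt \<Rightarrow> bool" where
  "line_above a b q \<longleftrightarrow> fst a \<noteq> fst b \<and>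
     (let (a, b) = (if fst a < fst b then (a, b) else (b, a)) in
        (fst b - fst a) * (snd q - snd a) < (snd b - snd a) * (fst q - fst a))"

definition line_below :: "pt \<Rightarrow> pt \<Rightarrow> pt \<Rightarrow> bool" where
  "line_below a b q \<longleftrightarrow> fst a \<noteq> fst b \<and>
     (let (a, b) = (if fst a < fst b then (a, b) else (b, a)) in
        (fst b - fst a) * (snd q - snd a) > (snd b - snd a) * (fst q - fst a))"

definition high_above :: "pt set \<Rightarrow> pt set \<Rightarrow> bool" where
  "high_above X Y \<longleftrightarrow>
     (\<forall>a\<in>X. \<forall>b\<in>X. a \<noteq> b \<longrightarrow> (\<forall>q\<in>Y. line_above a b q)) \<and>
     (\<forall>a\<in>Y. \<forall>b\<in>Y. a \<noteq> b \<longrightarrow> (\<forall>q\<in>X. line_below a b q))"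

end

theory Submission
  imports Defs
begin

text \<open>Measure every point by its offset y - r x against the slope r. Inductively, P k
  (for k < r) has x-coordinates in [0, 4^k), offsets in (-(r - k) 4^k, 0], and all its
  chords have slope less than r: the copy added at step k + 1 lies to the right and, its
  offset being lowered by (3 (r - k) - 4) 4^k \<ge> (r - k) 4^k, strictly below. For
  k = r - 1 the shift raises offsets by exactly 4^k, so R r lies to the right of L r with
  all offsets larger; together with the slope bound this makes every chord of R r pass
  above L r and every chord of L r pass below R r.\<close>

definition offset :: "int \<Rightarrow> pt \<Rightarrow> int" where
  "offset s p = snd p - s * fst p"

definition slopes_below :: "int \<Rightarrow> pt set \<Rightarrow> bool" where
  "slopes_below s X \<longleftrightarrow>
     (\<forall>a\<in>X. \<forall>b\<in>X. a \<noteq> b \<longrightarrow> fst a \<noteq> fst b \<and> (fst a < fst b \<longrightarrow> offset s b < offset s a))"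

lemma slopes_belowD:
  assumes "slopes_below s X" "a \<in> X" "b \<in> X" "fst a < fst b"
  shows "offset s b < offset s a"
  using assms unfolding slopes_below_def by fastforce

lemma slopes_below_fst_neq:
  assumes "slopes_below s X" "a \<in> X" "b \<in> X" "a \<noteq> b"
  shows "fst a \<noteq> fst b"
  using assms unfolding slopes_below_def by blast

lemma slopes_below_Un:
  assumes "slopes_below s X" "slopes_below s Y"
    and "\<And>p q. p \<in> X \<Longrightarrow> q \<in> Y \<Longrightarrow> fst p < fst q \<and> offset s q < offset s p"
  shows "slopes_below s (X \<union> Y)"
  using assms unfolding slopes_below_def by (smt (verit, best) Un_iff)

lemma mem_shift_iff: "q \<in> shift dx dy S \<longleftrightarrow> (\<exists>p\<in>S. q = (fst p + dx, snd p + dy))"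
  unfolding shift_def by force

lemma offset_shifted: "offset s (fst p + dx, snd p + dy) = offset s p + (dy - s * dx)"
  by (simp add: offset_def algebra_simps)

lemma slopes_below_shift:
  assumes "slopes_below s X"
  shows "slopes_below s (shift dx dy X)"
  unfolding slopes_below_def
proof (intro ballI impI)
  fix a b assume "a \<in> shift dx dy X" "b \<in> shift dx dy X" "a \<noteq> b"
  then obtain a' b' where "a' \<in> X" "b' \<in> X" "a' \<noteq> b'"
    and "a = (fst a' + dx, snd a' + dy)" "b = (fst b' + dx, snd b' + dy)"
    unfolding mem_shift_iff by blast
  then show "fst a \<noteq> fst b \<and> (fst a < fst b \<longrightarrow> offset s b < offset s a)"
    using assms slopes_belowD slopes_below_fst_neq by (simp add: offset_shifted)
qed

lemma line_above_commute: "line_above a b q = line_above b a q"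
  unfolding line_above_def by auto

lemma line_below_commute: "line_below a b q = line_below b a q"
  unfolding line_below_def by auto

lemma line_above_if_offset_le:
  assumes ab: "fst a < fst b" "offset s b < offset s a"
    and q: "fst q < fst a" "offset s q \<le> offset s a"
  shows "line_above a b q"
proof -
  define u v dx dy where "u = fst b - fst a" and "v = snd b - snd a"
    and "dx = fst q - fst a" and "dy = snd q - snd a"
  have "u > 0" "v < s * u" "dx < 0" "dy \<le> s * dx"
    using assms by (auto simp: u_def v_def dx_def dy_def offset_def algebra_simps)
  then have "u * dy \<le> (s * u) * dx"
    by (metis mult.assoc mult.commute mult_left_mono order_less_imp_le)
  also have "\<dots> < v * dx"
    using \<open>v < s * u\<close> \<open>dx < 0\<close> by (rule mult_strict_right_mono_neg)
  finally show ?thesis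
    using ab(1) by (simp add: line_above_def u_def v_def dx_def dy_def)
qed

lemma line_below_if_offset_gt:
  assumes ab: "fst a < fst b" "offset s b < offset s a"
    and q: "fst a < fst q" "offset s a < offset s q"
  shows "line_below a b q"
proof -
  define u v dx dy where "u = fst b - fst a" and "v = snd b - snd a"
    and "dx = fst q - fst a" and "dy = snd q - snd a"
  have "u > 0" "v < s * u" "dx > 0" "dy > s * dx"
    using assms by (auto simp: u_def v_def dx_def dy_def offset_def algebra_simps)
  have "v * dx < (s * u) * dx"
    using \<open>v < s * u\<close> \<open>dx > 0\<close> by (rule mult_strict_right_mono)
  also have "\<dots> < u * dy"
    using \<open>u > 0\<close> \<open>dy > s * dx\<close> by (metis mult.assoc mult.commute mult_strict_left_mono)
  finally show ?thesis
    using ab(1) by (simp add: line_below_def u_def v_def dx_def dy_def)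
qed

lemma high_above_if_slopes_below:
  assumes X: "slopes_below s X" and Y: "slopes_below s Y"
    and XY: "\<And>p q. p \<in> X \<Longrightarrow> q \<in> Y \<Longrightarrow> fst q < fst p \<and> offset s q < offset s p"
  shows "high_above X Y"
proof -
  have above: "line_above a b q" if "a \<in> X" "b \<in> X" "fst a < fst b" "q \<in> Y" for a b q
    using line_above_if_offset_le[OF that(3) slopes_belowD[OF X that(1-3)]] XY that by fastforce
  have below: "line_below a b q" if "a \<in> Y" "b \<in> Y" "fst a < fst b" "q \<in> X" for a b q
    using line_below_if_offset_gt[OF that(3) slopes_belowD[OF Y that(1-3)]] XY that by fastforce
  show ?thesis
    unfolding high_above_def
  proof (intro conjI ballI impI)
    fix a b q assume ab: "a \<in> X" "b \<in> X" "a \<noteq> b" and "q \<in> Y"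
    have "fst a < fst b \<or> fst b < fst a"
      using slopes_below_fst_neq[OF X ab] by linarith
    then show "line_above a b q"
      using above[OF ab(1,2) _ \<open>q \<in> Y\<close>] above[OF ab(2,1) _ \<open>q \<in> Y\<close>] line_above_commute by blast
  next
    fix a b q assume ab: "a \<in> Y" "b \<in> Y" "a \<noteq> b" and "q \<in> X"
    have "fst a < fst b \<or> fst b < fst a"
      using slopes_below_fst_neq[OF Y ab] by linarith
    then show "line_below a b q"
      using below[OF ab(1,2) _ \<open>q \<in> X\<close>] below[OF ab(2,1) _ \<open>q \<in> X\<close>] line_below_commute by blast
  qed
qed

lemma P_Suc_eq: "P (Suc k) = P k \<union> shift (3 * 4 ^ k) ((3 * int k + 4) * 4 ^ k) (P k)"
  by (simp add: delta_def delta'_def algebra_simps)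

lemma mem_P_SucE:
  assumes "p \<in> P (Suc k)"
  obtains "p \<in> P k"
    | p' where "p' \<in> P k" "p = (fst p' + 3 * 4 ^ k, snd p' + (3 * int k + 4) * 4 ^ k)"
  using assms unfolding P_Suc_eq Un_iff mem_shift_iff by blast

lemma fst_P_bounds: "p \<in> P k \<Longrightarrow> 0 \<le> fst p \<and> fst p < 4 ^ k"
proof (induction k arbitrary: p)
  case (Suc k)
  from Suc.prems show ?case
  proof (rule mem_P_SucE)
    assume "p \<in> P k"
    moreover have "(4::int) ^ k \<le> 4 ^ Suc k" by simp
    ultimately show ?thesis using Suc.IH by fastforce
  next
    fix p' assume "p' \<in> P k" "p = (fst p' + 3 * 4 ^ k, snd p' + (3 * int k + 4) * 4 ^ k)"
    then show ?thesis using Suc.IH[of p'] by simp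
  qed
qed simp

lemma offset_P_bounds:
  "k < r \<Longrightarrow> p \<in> P k \<Longrightarrow> -(int r - int k) * 4 ^ k < offset (int r) p \<and> offset (int r) p \<le> 0"
proof (induction k arbitrary: p)
  case 0
  then show ?case by (simp add: offset_def)
next
  case (Suc k)
  from Suc.prems(2) show ?case
  proof (rule mem_P_SucE)
    assume "p \<in> P k"
    moreover have "(int r - int (Suc k)) * 4 ^ Suc k \<ge> (int r - int k) * 4 ^ k"
      using Suc.prems(1) by simp
    moreover have "-(int r - int k) * 4 ^ k < offset (int r) p \<and> offset (int r) p \<le> 0"
      using Suc.IH[of p] Suc.prems(1) \<open>p \<in> P k\<close> by simp
    ultimately show ?thesis by linarith
  next
    fix p' assume p': "p' \<in> P k" "p = (fst p' + 3 * 4 ^ k, snd p' + (3 * int k + 4) * 4 ^ k)"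
    have "offset (int r) p = offset (int r) p' + (3 * int k + 4 - 3 * int r) * 4 ^ k"
      by (simp add: p'(2) offset_shifted algebra_simps)
    moreover have "(3 * int k + 4 - 3 * int r) * 4 ^ k \<le> 0"
      using Suc.prems(1) by (intro mult_nonpos_nonneg) auto
    moreover have "-(int r - int (Suc k)) * 4 ^ Suc k = -(int r - int k) * 4 ^ k + (3 * int k + 4 - 3 * int r) * 4 ^ k"
      by (simp add: algebra_simps)
    ultimately show ?thesis using Suc.IH[of p'] p'(1) Suc.prems(1) by simp
  qed
qed

lemma slopes_below_P: "k < r \<Longrightarrow> slopes_below (int r) (P k)"
proof (induction k)
  case 0
  then show ?case by (simp add: slopes_below_def)
next
  case (Suc k)
  have sep: "fst p < fst q \<and> offset (int r) q < offset (int r) p"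
    if p: "p \<in> P k" and q: "q \<in> shift (3 * 4 ^ k) ((3 * int k + 4) * 4 ^ k) (P k)" for p q
  proof -
    obtain q' where q': "q' \<in> P k" "q = (fst q' + 3 * 4 ^ k, snd q' + (3 * int k + 4) * 4 ^ k)"
      using q unfolding mem_shift_iff by blast
    have "(3 * int k + 4 - 3 * int r) * 4 ^ k \<le> -(int r - int k) * 4 ^ k"
      using Suc.prems by (intro mult_right_mono) auto
    then show ?thesis
      using fst_P_bounds[OF p] fst_P_bounds[OF q'(1)]
        offset_P_bounds[of k r, OF _ p] offset_P_bounds[of k r, OF _ q'(1)] Suc.prems
      by (simp add: q'(2) offset_shifted algebra_simps)
  qed
  show ?case
    unfolding P_Suc_eq
    using Suc by (intro slopes_below_Un slopes_below_shift sep) auto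
qed

lemma shift_P_right_above_P:
  assumes p: "p \<in> shift (3 * 4 ^ k) ((3 * int k + 4) * 4 ^ k) (P k)" and q: "q \<in> P k"
  shows "fst q < fst p \<and> offset (int (Suc k)) q < offset (int (Suc k)) p"
proof -
  obtain p' where p': "p' \<in> P k" "p = (fst p' + 3 * 4 ^ k, snd p' + (3 * int k + 4) * 4 ^ k)"
    using p unfolding mem_shift_iff by blast
  have "offset (int (Suc k)) p = offset (int (Suc k)) p' + 4 ^ k"
    by (simp add: p'(2) offset_shifted algebra_simps)
  moreover have "-(4 ^ k) < offset (int (Suc k)) p'" "offset (int (Suc k)) q \<le> 0"
    using offset_P_bounds[of k "Suc k", OF _ p'(1)] offset_P_bounds[of k "Suc k", OF _ q] by simp_all
  moreover have "fst q < 4 ^ k" "0 \<le> fst p'" "(0::int) < 4 ^ k"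
    using fst_P_bounds[OF q] fst_P_bounds[OF p'(1)] by simp_all
  ultimately show ?thesis
    unfolding p'(2) fst_conv by (intro conjI; linarith)
qed

theorem lemma4:
  fixes r :: nat
  assumes "r \<ge> 1"
  shows "high_above (R r) (L r)"
proof -
  obtain k where r: "r = Suc k" using assms by (cases r) auto
  have L: "L (Suc k) = P k"
    and R: "R (Suc k) = shift (3 * 4 ^ k) ((3 * int k + 4) * 4 ^ k) (P k)"
    by (simp_all add: L_def R_def delta_def delta'_def algebra_simps)
  have slopes: "slopes_below (int (Suc k)) (P k)"
    by (rule slopes_below_P) simp
  show ?thesis
    unfolding r L R
    using slopes_below_shift[OF slopes] slopes shift_P_right_above_P
    by (rule high_above_if_slopes_below)
qed

end
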